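(* Let $n,k\ge1$ and let $x_1,\dots,x_j$ be distinct nodes of $\Gamma_{2^n}$ such that the subgraph of $\Gamma_{2^n}$ induced on $\{x_1,\dots,x_j\}$ is exactly the directed cycle $x_1\to x_2\to\cdots\to x_j\to x_1$. Then the subgraph of $\Gamma_{2^{n+k-1}}$ induced on $\overline{H}_{M_k}^{-1}(\{x_1,\dots,x_j\})$ is a disjoint union of directed cycles.
   Context: $T(x)=x/2$ for $x$ even, $T(x)=(3x+1)/2$ for $x$ odd, extended to $\mathbb{Z}_2$; $T_0(x)=x/2$, $T_1(x)=(3x+1)/2$. $\Gamma_d$ is the directed graph on $\mathbb{Z}/d\mathbb{Z}$ with a black arrow $r\to s$ iff there exist positive integers $x\equiv r$, $y\equiv s\pmod d$ with $x$ even and $T_0(x)=y$, and a red arrow $r\to s$ iff there exist such $x,y$ with $x$ odd and $T_1(x)=y$. The parity vector map $\Phi^{-1}:\mathbb{Z}_2\to\mathbb{Z}_2$ is $\Phi^{-1}(x)=\sum_{i\ge0}(T^i(x)\bmod 2)2^i$; it is a bijection with inverse $\Phi$. For $k\ge1$, $M_k(\sum_i a_i2^i)=\sum_i m_i2^i$ with $m_i\equiv a_i+\cdots+a_{i+k-1}\pmod2$, and $H_{M_k}=\Phi\circ M_k\circ\Phi^{-1}$, which commutes with $T$. The residue of $H_{M_k}(x)$ mod $2^n$ depends only on $x$ mod $2^{n+k-1}$; $\overline{H}_{M_k}:\mathbb{Z}/2^{n+k-1}\mathbb{Z}\to\mathbb{Z}/2^n\mathbb{Z}$ is the induced map. *)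

theory Defs
  imports Main "HOL-Library.Disjoint_Sets"
begin

text \<open>Collatz map T on natural numbers (representatives of 2-adic residues).\<close>
definition T :: "nat \<Rightarrow> nat" where
  "T x = (if even x then x div 2 else (3 * x + 1) div 2)"

text \<open>Arrows of Gamma_d on Z/dZ, residues represented by 0..d-1.\<close>
definition gamma_black :: "nat \<Rightarrow> nat \<Rightarrow> nat \<Rightarrow> bool" where
  "gamma_black d r s \<longleftrightarrow> (\<exists>x y :: nat. 0 < x \<and> 0 < y \<and> x mod d = r \<and> y mod d = s
      \<and> even x \<and> y = x div 2)"

definition gamma_red :: "nat \<Rightarrow> nat \<Rightarrow> nat \<Rightarrow> bool" where
  "gamma_red d r s \<longleftrightarrow> (\<exists>x y :: nat. 0 < x \<and> 0 < y \<and> x mod d = r \<and> y mod d = s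
      \<and> odd x \<and> y = (3 * x + 1) div 2)"

definition gamma_edge :: "nat \<Rightarrow> nat \<Rightarrow> nat \<Rightarrow> bool" where
  "gamma_edge d r s \<longleftrightarrow> gamma_black d r s \<or> gamma_red d r s"

text \<open>Phi^{-1}(x) mod 2^N: the first N parity bits of the trajectory of x.\<close>
definition parvec :: "nat \<Rightarrow> nat \<Rightarrow> nat" where
  "parvec N x = (\<Sum>i<N. ((T ^^ i) x mod 2) * 2 ^ i)"

text \<open>M_k(a) mod 2^n: m_i = a_i + ... + a_(i+k-1) mod 2.\<close>
definition Mk :: "nat \<Rightarrow> nat \<Rightarrow> nat \<Rightarrow> nat" where
  "Mk k n a = (\<Sum>i<n. ((\<Sum>j<k. a div 2 ^ (i + j) mod 2) mod 2) * 2 ^ i)"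

text \<open>Induced map Hbar_{M_k} : Z/2^(n+k-1) -> Z/2^n, i.e. Phi o M_k o Phi^{-1} taken mod 2^n.\<close>
definition Hbar :: "nat \<Rightarrow> nat \<Rightarrow> nat \<Rightarrow> nat" where
  "Hbar n k x = (THE y. y < 2 ^ n \<and> parvec n y = Mk k n (parvec (n + k - 1) x))"

definition is_dcycle :: "('a \<Rightarrow> 'a \<Rightarrow> bool) \<Rightarrow> 'a set \<Rightarrow> bool" where
  "is_dcycle E S \<longleftrightarrow> (\<exists>cs. cs \<noteq> [] \<and> distinct cs \<and> set cs = S \<and>
     (\<forall>a\<in>S. \<forall>b\<in>S. E a b \<longleftrightarrow>
        (\<exists>i<length cs. a = cs ! i \<and> b = cs ! ((i + 1) mod length cs))))"

definition disjoint_union_of_cycles :: "('a \<Rightarrow> 'a \<Rightarrow> bool) \<Rightarrow> 'a set \<Rightarrow> bool" where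
  "disjoint_union_of_cycles E S \<longleftrightarrow> (\<exists>P. partition_on S P \<and> (\<forall>B\<in>P. is_dcycle E B) \<and>
     (\<forall>B\<in>P. \<forall>C\<in>P. B \<noteq> C \<longrightarrow> (\<forall>a\<in>B. \<forall>b\<in>C. \<not> E a b)))"

end

theory Submission
  imports Defs "HOL-Combinatorics.Orbits"
begin

(* Write pbit x i for the i-th parity bit of the trajectory of x, i.e. the
   i-th binary digit of Phi^{-1}(x).  Two facts turn the statement into combinatorics of
   bit strings:
   (1) the first N parity bits of x determine x mod 2^N, and every bit string of length N
       occurs, so residues mod 2^N are exactly the bit strings of length N;
   (2) r -> s is an arrow of Gamma_{2^N} iff the bits of s are those of r shifted by one
       place (the last bit of s being free), and Hbar_{M_k} replaces the bit string of x by
       its sums mod 2 over windows of length k.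
   Consequently Hbar maps arrows to arrows, every arrow of Gamma_{2^n} leaving Hbar x lifts
   to exactly one arrow leaving x (the free last bit is fixed by one window sum), and two
   arrows entering the same node with equal images start at the same node (the first bit is
   fixed by the first window sum).  A general covering lemma then shows that on the
   preimage of the cycle every node has exactly one successor and at most one predecessor,
   i.e. the induced subgraph is the graph of a permutation, and a permutation of a finite set
   splits into the disjoint cycles given by its orbits. *)

lemma orbit_is_dcycle:
  assumes perm: "permutation f"
    and E: "\<And>u v. u \<in> orbit f a \<Longrightarrow> v \<in> orbit f a \<Longrightarrow> E u v \<longleftrightarrow> v = f u"
  shows "is_dcycle E (orbit f a)"
proof -
  define d where "d = funpow_dist1 f a a"
  define cs where "cs = map (\<lambda>i. (f ^^ i) a) [0..<d]"
  have self: "a \<in> orbit f a" using permutation_self_in_orbit[OF perm] .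
  have period: "(f ^^ d) a = a" unfolding d_def using funpow_dist1_prop[OF self] .
  have orbit_eq: "orbit f a = set cs"
    unfolding cs_def d_def using orbit_conv_funpow_dist1[OF self] by (simp only: set_map set_upt)
  have len: "length cs = d" unfolding cs_def by simp
  have nth: "cs ! i = (f ^^ i) a" if "i < d" for i unfolding cs_def using that by simp
  have next_nth: "cs ! ((i + 1) mod d) = f (cs ! i)" if "i < d" for i
    using that nth funpow_mod_eq[OF period, of "i + 1"] by simp
  show ?thesis unfolding is_dcycle_def
  proof (intro exI[of _ cs] conjI ballI)
    show "cs \<noteq> []" using len unfolding d_def by auto
    show "distinct cs"
      unfolding cs_def distinct_map set_upt d_def using distinct_upt inj_on_funpow_dist1[OF self] by blast
    show "set cs = orbit f a" using orbit_eq ..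
  next
    fix u v assume u: "u \<in> orbit f a" and v: "v \<in> orbit f a"
    then obtain i where i: "i < d" "u = cs ! i" using orbit_eq len by (auto simp: in_set_conv_nth)
    show "E u v \<longleftrightarrow> (\<exists>i<length cs. u = cs ! i \<and> v = cs ! ((i + 1) mod length cs))"
      using E[OF u v] i next_nth len by (metis nth_eq_iff_index_eq orbit_eq[symmetric] distinct_conv_nth)
  qed
qed

lemma permutes_disjoint_cycles:
  assumes "finite S" and f: "f permutes S"
    and E: "\<And>u v. u \<in> S \<Longrightarrow> v \<in> S \<Longrightarrow> E u v \<longleftrightarrow> v = f u"
  shows "disjoint_union_of_cycles E S"
proof -
  have perm: "permutation f" using assms permutation_permutes by blast
  have orbit_sub: "orbit f a \<subseteq> S" if "a \<in> S" for a using permutes_orbit_subset[OF f that] .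
  have cyclic: "cyclic_on f (orbit f a)" for a using cyclic_on_orbit'[OF perm] .
  have same_orbit: "B = C" if "B \<in> orbit f ` S" "C \<in> orbit f ` S" "c \<in> B" "c \<in> C" for B C c
    using that orbit_cyclic_eq3[OF cyclic] by blast
  show ?thesis unfolding disjoint_union_of_cycles_def
  proof (intro exI[of _ "orbit f ` S"] conjI ballI impI)
    show "partition_on S (orbit f ` S)"
    proof (rule partition_onI)
      show "\<Union> (orbit f ` S) = S"
        using orbit_sub permutation_self_in_orbit[OF perm] by blast
      show "disjnt B C" if "B \<in> orbit f ` S" "C \<in> orbit f ` S" "B \<noteq> C" for B C
        using same_orbit[OF that(1,2)] that(3) unfolding disjnt_def by blast
      show "{} \<notin> orbit f ` S" by (metis image_iff orbit_nonempty)
    qed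
  next
    fix B assume "B \<in> orbit f ` S"
    then obtain a where "a \<in> S" "B = orbit f a" by blast
    then show "is_dcycle E B" using orbit_is_dcycle[OF perm] E orbit_sub by blast
  next
    fix B C u v assume B: "B \<in> orbit f ` S" and C: "C \<in> orbit f ` S" and "B \<noteq> C" "u \<in> B" "v \<in> C"
    moreover have "B \<subseteq> S" "C \<subseteq> S" using B C orbit_sub by blast+
    moreover have "f u \<in> B" using B \<open>u \<in> B\<close> cyclic_on_inI[OF cyclic] by blast
    ultimately show "\<not> E u v" using E same_orbit[OF B C] by blast
  qed
qed

definition permutation_graph_on :: "('a \<Rightarrow> 'a \<Rightarrow> bool) \<Rightarrow> 'a set \<Rightarrow> bool" where
  "permutation_graph_on E S \<longleftrightarrow> (\<forall>u\<in>S. \<exists>v\<in>S. E u v)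
     \<and> (\<forall>u\<in>S. \<forall>v\<in>S. \<forall>w\<in>S. E u v \<longrightarrow> E u w \<longrightarrow> v = w)
     \<and> (\<forall>u\<in>S. \<forall>v\<in>S. \<forall>w\<in>S. E u w \<longrightarrow> E v w \<longrightarrow> u = v)"

text \<open>On a finite set, such a graph is the graph of a permutation: the unique successor map is
  injective, hence bijective.\<close>
lemma permutation_graph_on_permutes:
  assumes "finite S" and "permutation_graph_on E S"
  obtains f where "f permutes S" and "\<And>u v. u \<in> S \<Longrightarrow> v \<in> S \<Longrightarrow> E u v \<longleftrightarrow> v = f u"
proof -
  have ex: "\<exists>v. v \<in> S \<and> E u v" if "u \<in> S" for u
    using assms(2) that unfolding permutation_graph_on_def by blast
  have succ_unique: "v = w" if "u \<in> S" "v \<in> S" "w \<in> S" "E u v" "E u w" for u v w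
    using assms(2) that unfolding permutation_graph_on_def by blast
  have pred_unique: "u = v" if "u \<in> S" "v \<in> S" "w \<in> S" "E u w" "E v w" for u v w
    using assms(2) that unfolding permutation_graph_on_def by blast
  define f where "f u = (if u \<in> S then SOME v. v \<in> S \<and> E u v else u)" for u
  have succ: "f u \<in> S" "E u (f u)" if "u \<in> S" for u
    using someI_ex[OF ex[OF that]] that by (simp_all add: f_def)
  have E_iff: "E u v \<longleftrightarrow> v = f u" if "u \<in> S" "v \<in> S" for u v
    using succ[OF that(1)] succ_unique[OF that(1,2)] that(2) by blast
  have inj: "inj_on f S"
  proof (rule inj_onI)
    fix u v assume "u \<in> S" "v \<in> S" "f u = f v"
    then show "u = v" using pred_unique[of u v "f u"] succ by metis
  qed
  have "f ` S = S" using endo_inj_surj[OF assms(1) _ inj] succ(1) by blast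
  then have "bij_betw f S S" using inj by (simp add: bij_betw_def)
  then have "f permutes S" by (rule bij_imp_permutes) (simp add: f_def)
  then show ?thesis using that E_iff by blast
qed

corollary permutation_graph_on_cycles:
  assumes "finite S" and "permutation_graph_on E S"
  shows "disjoint_union_of_cycles E S"
proof -
  obtain f where "f permutes S" and "\<And>u v. u \<in> S \<Longrightarrow> v \<in> S \<Longrightarrow> E u v \<longleftrightarrow> v = f u"
    using permutation_graph_on_permutes[OF assms] by blast
  then show ?thesis using permutes_disjoint_cycles[OF assms(1)] by blast
qed

lemma dcycle_permutation_graph_on:
  assumes "is_dcycle E S"
  shows "permutation_graph_on E S"
proof -
  obtain cs where cs: "cs \<noteq> []" "distinct cs" "set cs = S"
    and E: "\<And>a b. a \<in> S \<Longrightarrow> b \<in> S \<Longrightarrow> E a b \<longleftrightarrow>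
             (\<exists>i<length cs. a = cs ! i \<and> b = cs ! ((i + 1) mod length cs))"
    using assms unfolding is_dcycle_def by blast
  define L where "L = length cs"
  have L: "0 < L" using cs(1) unfolding L_def by simp
  have nth_inj: "i = j" if "i < L" "j < L" "cs ! i = cs ! j" for i j
    using that cs(2) nth_eq_iff_index_eq unfolding L_def by blast
  have in_S: "cs ! i \<in> S" if "i < L" for i using that cs(3) unfolding L_def by auto
  have next_less: "(i + 1) mod L < L" for i using L by simp
  have next_eq: "(i + 1) mod L = (if i + 1 = L then 0 else i + 1)" if "i < L" for i
    using that by (auto simp: mod_if)
  have next_inj: "i = j" if "i < L" "j < L" "(i + 1) mod L = (j + 1) mod L" for i j
    using that next_eq[OF that(1)] next_eq[OF that(2)] by (auto split: if_splits)
  have E_nth: "E (cs ! i) b \<longleftrightarrow> b = cs ! ((i + 1) mod L)" if i: "i < L" and b: "b \<in> S" for i b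
  proof
    assume "E (cs ! i) b"
    then obtain j where "j < L" "cs ! i = cs ! j" "b = cs ! ((j + 1) mod L)"
      using E[OF in_S[OF i] b] unfolding L_def by blast
    then show "b = cs ! ((i + 1) mod L)" using nth_inj[OF i] by blast
  qed (use E[OF in_S[OF i] b] i in \<open>auto simp: L_def\<close>)
  have S_nth: "\<exists>i<L. u = cs ! i" if "u \<in> S" for u
    using that cs(3) unfolding L_def by (auto simp: in_set_conv_nth)
  show ?thesis unfolding permutation_graph_on_def
  proof (intro conjI ballI impI)
    fix u assume "u \<in> S"
    then obtain i where i: "i < L" "u = cs ! i" using S_nth by blast
    have "E u (cs ! ((i + 1) mod L))" using E_nth[OF i(1) in_S[OF next_less]] i(2) by simp
    then show "\<exists>v\<in>S. E u v" using in_S[OF next_less] by blast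
  next
    fix u v w assume "u \<in> S" "v \<in> S" "w \<in> S" "E u v" "E u w"
    moreover obtain i where i: "i < L" "u = cs ! i" using S_nth \<open>u \<in> S\<close> by blast
    ultimately show "v = w" using E_nth[OF i(1)] by simp
  next
    fix u v w assume "u \<in> S" "v \<in> S" "w \<in> S" "E u w" "E v w"
    moreover obtain i j where ij: "i < L" "u = cs ! i" "j < L" "v = cs ! j"
      using S_nth \<open>u \<in> S\<close> \<open>v \<in> S\<close> by blast
    ultimately have "cs ! ((i + 1) mod L) = cs ! ((j + 1) mod L)"
      using E_nth[OF ij(1)] E_nth[OF ij(3)] by simp
    then have "(i + 1) mod L = (j + 1) mod L" using nth_inj next_less by blast
    then show "u = v" using ij next_inj by blast
  qed
qed

lemma permutation_graph_on_lift:
  assumes F: "permutation_graph_on F X"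
    and hom: "\<And>x y. x \<in> A \<Longrightarrow> y \<in> A \<Longrightarrow> E x y \<Longrightarrow> F (h x) (h y)"
    and lift: "\<And>x m. x \<in> A \<Longrightarrow> F (h x) m \<Longrightarrow> \<exists>y\<in>A. E x y \<and> h y = m"
    and succ_inj: "\<And>x y z. x \<in> A \<Longrightarrow> y \<in> A \<Longrightarrow> z \<in> A \<Longrightarrow> E x y \<Longrightarrow> E x z \<Longrightarrow> h y = h z \<Longrightarrow> y = z"
    and pred_inj: "\<And>x y z. x \<in> A \<Longrightarrow> y \<in> A \<Longrightarrow> z \<in> A \<Longrightarrow> E x z \<Longrightarrow> E y z \<Longrightarrow> h x = h y \<Longrightarrow> x = y"
  shows "permutation_graph_on E {x \<in> A. h x \<in> X}"
  unfolding permutation_graph_on_def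
proof (intro conjI ballI impI)
  fix x assume x: "x \<in> {x \<in> A. h x \<in> X}"
  then obtain m where "m \<in> X" "F (h x) m" using F unfolding permutation_graph_on_def by blast
  then show "\<exists>y\<in>{x \<in> A. h x \<in> X}. E x y" using lift x by blast
next
  fix x y z assume "x \<in> {x \<in> A. h x \<in> X}" "y \<in> {x \<in> A. h x \<in> X}" "z \<in> {x \<in> A. h x \<in> X}"
    and "E x y" "E x z"
  moreover from this have "h y = h z" using F hom unfolding permutation_graph_on_def by blast
  ultimately show "y = z" using succ_inj by blast
next
  fix x y z assume "x \<in> {x \<in> A. h x \<in> X}" "y \<in> {x \<in> A. h x \<in> X}" "z \<in> {x \<in> A. h x \<in> X}"
    and "E x z" "E y z"
  moreover from this have "h x = h y" using F hom unfolding permutation_graph_on_def by blast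
  ultimately show "x = y" using pred_inj by blast
qed

lemma affine_mod_cancel_nat:
  fixes a b c d m :: nat
  assumes "coprime m c"
  shows "(c * a + d) mod m = (c * b + d) mod m \<longleftrightarrow> a mod m = b mod m"
proof -
  have to_int: "P mod m = Q mod m \<longleftrightarrow> int P mod int m = int Q mod int m" for P Q :: nat
    by (metis of_nat_eq_iff of_nat_mod)
  have "coprime (int m) (int c)" using assms by simp
  then have "int m dvd int c * (int a - int b) \<longleftrightarrow> int m dvd int a - int b"
    by (rule coprime_dvd_mult_right_iff)
  moreover have "int c * int a + int d - (int c * int b + int d) = int c * (int a - int b)"
    by (simp add: algebra_simps)
  ultimately show ?thesis unfolding to_int by (simp add: mod_eq_dvd_iff)
qed

definition pbit :: "nat \<Rightarrow> nat \<Rightarrow> nat" where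
  "pbit x i = (T ^^ i) x mod 2"

definition from_bits :: "nat \<Rightarrow> (nat \<Rightarrow> nat) \<Rightarrow> nat" where
  "from_bits N b = (\<Sum>i<N. b i * 2 ^ i)"

lemma pbit_T: "pbit (T x) i = pbit x (Suc i)"
  unfolding pbit_def by (simp only: funpow_Suc_right o_apply)

lemma pbit_less_2: "pbit x i < 2"
  unfolding pbit_def by simp

lemma pbit_0: "pbit x 0 = x mod 2"
  unfolding pbit_def by simp

lemma parvec_from_bits: "parvec N x = from_bits N (pbit x)"
  unfolding parvec_def from_bits_def pbit_def by simp

lemma from_bits_Suc: "from_bits (Suc N) b = b 0 + 2 * from_bits N (\<lambda>i. b (Suc i))"
  unfolding from_bits_def sum.lessThan_Suc_shift by (simp add: sum_distrib_left ac_simps)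

lemma from_bits_less:
  assumes "\<forall>i<N. b i < 2"
  shows "from_bits N b < 2 ^ N"
  using assms
proof (induction N arbitrary: b)
  case 0 then show ?case by (simp add: from_bits_def)
next
  case (Suc N)
  have "from_bits N (\<lambda>i. b (Suc i)) < 2 ^ N" and "b 0 < 2" using Suc by auto
  then show ?case by (simp add: from_bits_Suc)
qed

lemma from_bits_digit:
  assumes "\<forall>i<N. b i < 2" and "i < N"
  shows "from_bits N b div 2 ^ i mod 2 = b i"
  using assms
proof (induction N arbitrary: b i)
  case 0 then show ?case by simp
next
  case (Suc N)
  show ?case
  proof (cases i)
    case 0 then show ?thesis using Suc.prems by (simp add: from_bits_Suc)
  next
    case (Suc i')
    have "from_bits (Suc N) b div 2 ^ i = from_bits N (\<lambda>i. b (Suc i)) div 2 ^ i'"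
      using Suc.prems(1) by (simp add: from_bits_Suc Suc div_mult2_eq)
    then show ?thesis using Suc.IH[of "\<lambda>i. b (Suc i)" i'] Suc.prems Suc by auto
  qed
qed

lemma T_mod_iff:
  assumes "x mod 2 = y mod 2"
  shows "T x mod 2 ^ N = T y mod 2 ^ N \<longleftrightarrow> x mod 2 ^ Suc N = y mod 2 ^ Suc N"
proof -
  have double: "T x mod 2 ^ N = T y mod 2 ^ N \<longleftrightarrow> (2 * T x) mod 2 ^ Suc N = (2 * T y) mod 2 ^ Suc N"
    by (simp add: mod_mult_mult1)
  show ?thesis
  proof (cases "even x")
    case True
    then have "2 * T x = x" "2 * T y = y" using assms by (auto simp: T_def even_iff_mod_2_eq_zero)
    then show ?thesis using double by simp
  next
    case False
    then have "2 * T x = 3 * x + 1" "2 * T y = 3 * y + 1"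
      using assms by (auto simp: T_def odd_iff_mod_2_eq_one)
    moreover have "coprime ((2::nat) ^ Suc N) 3" by simp
    ultimately show ?thesis using double affine_mod_cancel_nat by metis
  qed
qed

lemma pbits_eq_iff_mod: "(\<forall>i<N. pbit x i = pbit y i) \<longleftrightarrow> x mod 2 ^ N = y mod 2 ^ N"
proof (induction N arbitrary: x y)
  case 0 then show ?case by simp
next
  case (Suc N)
  have "(\<forall>i<Suc N. pbit x i = pbit y i) \<longleftrightarrow>
        pbit x 0 = pbit y 0 \<and> (\<forall>i<N. pbit (T x) i = pbit (T y) i)"
    by (auto simp: less_Suc_eq_0_disj pbit_T)
  also have "\<dots> \<longleftrightarrow> x mod 2 = y mod 2 \<and> T x mod 2 ^ N = T y mod 2 ^ N"
    using Suc.IH[of "T x" "T y"] by (simp add: pbit_0)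
  also have "\<dots> \<longleftrightarrow> x mod 2 ^ Suc N = y mod 2 ^ Suc N"
  proof
    assume "x mod 2 ^ Suc N = y mod 2 ^ Suc N"
    moreover from this have "x mod 2 = y mod 2"
      by (metis mod_mod_cancel dvd_power zero_less_Suc power_one_right)
    ultimately show "x mod 2 = y mod 2 \<and> T x mod 2 ^ N = T y mod 2 ^ N" using T_mod_iff by blast
  qed (use T_mod_iff in blast)
  finally show ?case .
qed

lemma pbits_determine:
  assumes "y < 2 ^ N" and "z < 2 ^ N" and "\<And>i. i < N \<Longrightarrow> pbit y i = pbit z i"
  shows "y = z"
  using assms pbits_eq_iff_mod[of N y z] by simp

lemma parvec_bit:
  assumes "i < N"
  shows "parvec N x div 2 ^ i mod 2 = pbit x i"
  unfolding parvec_from_bits using from_bits_digit assms pbit_less_2 by blast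

text \<open>Every bit string of length N is the parity vector of some residue mod 2^N, because the
  parity vector map is injective on the finite set of residues.\<close>
lemma pbits_surj:
  assumes b: "\<forall>i<N. b i < 2"
  obtains x where "x < 2 ^ N" and "\<And>i. i < N \<Longrightarrow> pbit x i = b i"
proof -
  have "inj_on (parvec N) {..<2 ^ N}"
  proof (rule inj_onI)
    fix x y assume "x \<in> {..<(2::nat) ^ N}" "y \<in> {..<(2::nat) ^ N}" "parvec N x = parvec N y"
    then show "x = y" using pbits_determine parvec_bit by (metis lessThan_iff)
  qed
  moreover have "parvec N ` {..<2 ^ N} \<subseteq> {..<2 ^ N}"
    using from_bits_less pbit_less_2 by (auto simp: parvec_from_bits)
  ultimately have "parvec N ` {..<2 ^ N} = {..<2 ^ N}" by (simp add: endo_inj_surj)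
  moreover have "from_bits N b < 2 ^ N" using from_bits_less[OF b] .
  ultimately obtain x where x: "x < 2 ^ N" "parvec N x = from_bits N b" by (metis imageE lessThan_iff)
  have "pbit x i = b i" if "i < N" for i
    using parvec_bit[OF that, of x] from_bits_digit[OF b that] x(2) by simp
  then show ?thesis using that x(1) by blast
qed

lemma Hbar_pbit:
  assumes k: "1 \<le> k"
  shows "Hbar n k x < 2 ^ n" and "\<And>i. i < n \<Longrightarrow> pbit (Hbar n k x) i = (\<Sum>j<k. pbit x (i + j)) mod 2"
proof -
  define c where "c i = (\<Sum>j<k. pbit x (i + j)) mod 2" for i
  have c2: "\<forall>i<n. c i < 2" unfolding c_def by simp
  have Mk_eq: "Mk k n (parvec (n + k - 1) x) = from_bits n c"
    unfolding Mk_def from_bits_def c_def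
    by (intro sum.cong refl arg_cong2[where f = "(*)"] arg_cong2[where f = "(mod)"])
       (use k parvec_bit in \<open>auto\<close>)
  obtain y where y: "y < 2 ^ n" "\<And>i. i < n \<Longrightarrow> pbit y i = c i" using pbits_surj[OF c2] by blast
  have char: "z < 2 ^ n \<and> parvec n z = from_bits n c \<longleftrightarrow> z = y" for z
  proof
    assume z: "z < 2 ^ n \<and> parvec n z = from_bits n c"
    show "z = y"
    proof (rule pbits_determine[OF _ y(1)])
      fix i assume i: "i < n"
      have "pbit z i = from_bits n c div 2 ^ i mod 2" using parvec_bit[OF i, of z] z by simp
      also have "\<dots> = c i" using from_bits_digit[OF c2 i] .
      finally show "pbit z i = pbit y i" using y(2)[OF i] by simp
    qed (use z in simp)
  qed (use y in \<open>simp add: parvec_from_bits from_bits_def\<close>)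
  have Hbar_eq: "Hbar n k x = y" unfolding Hbar_def Mk_eq char by simp
  show "Hbar n k x < 2 ^ n" using Hbar_eq y(1) by simp
  show "pbit (Hbar n k x) i = (\<Sum>j<k. pbit x (i + j)) mod 2" if "i < n" for i
    using Hbar_eq y(2)[OF that] unfolding c_def by simp
qed

lemma mod_double: "z mod (2 * M) = M * (z div M mod 2) + z mod (M::nat)"
  using mod_mult2_eq[of z M 2] by (simp add: mult.commute)

text \<open>Description of the arrows of Gamma_(2M): a black arrow halves an even residue, a red arrow
  applies (3r+1)/2 to an odd one, the target being determined modulo M only; its remaining digit
  can be chosen freely by moving the source by a multiple of 2M.\<close>
lemma gamma_black_iff:
  assumes M: "0 < M"
  shows "gamma_black (2 * M) r s \<longleftrightarrow> r < 2 * M \<and> s < 2 * M \<and> even r \<and> r div 2 = s mod M"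
proof
  assume "gamma_black (2 * M) r s"
  then obtain a where r: "r = (2 * a) mod (2 * M)" and s: "s = a mod (2 * M)"
    unfolding gamma_black_def by (auto elim!: evenE)
  have "r = 2 * (a mod M)" using r by (simp add: mod_mult_mult1)
  moreover have "s mod M = a mod M" using s by (simp add: mod_mod_cancel)
  ultimately show "r < 2 * M \<and> s < 2 * M \<and> even r \<and> r div 2 = s mod M" using M r s by simp
next
  assume h: "r < 2 * M \<and> s < 2 * M \<and> even r \<and> r div 2 = s mod M"
  define y where "y = s + 2 * M"
  have "(2 * y) mod (2 * M) = 2 * (y mod M)" by (rule mod_mult_mult1)
  also have "\<dots> = 2 * (s mod M)" unfolding y_def by simp
  also have "\<dots> = r" using h by (metis dvd_mult_div_cancel)
  finally have "(2 * y) mod (2 * M) = r" .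
  moreover have "y mod (2 * M) = s" "0 < y" using h M unfolding y_def by simp_all
  ultimately show "gamma_black (2 * M) r s"
    unfolding gamma_black_def by (intro exI[of _ "2 * y"] exI[of _ y]) simp
qed

text \<open>Adding 3c (which moves the target of a red arrow by 3Mc) reaches either parity.\<close>
lemma parity_shift_by_3:
  fixes u v :: nat
  assumes "v < 2"
  shows "\<exists>c. (u + 3 * c) mod 2 = v"
proof (cases "u mod 2 = v")
  case True then show ?thesis by (intro exI[of _ 0]) simp
next
  case False then show ?thesis using assms by (intro exI[of _ 1]) presburger
qed

lemma gamma_red_iff:
  assumes M: "0 < M"
  shows "gamma_red (2 * M) r s \<longleftrightarrow> r < 2 * M \<and> s < 2 * M \<and> odd r \<and> (3 * r + 1) div 2 mod M = s mod M"
proof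
  assume "gamma_red (2 * M) r s"
  then obtain x where x: "r = x mod (2 * M)" "odd x" and s: "s = (3 * x + 1) div 2 mod (2 * M)"
    unfolding gamma_red_def by blast
  obtain q where q: "x = r + 2 * M * q" using x(1) by (metis div_mult_mod_eq add.commute mult.commute)
  have "3 * x + 1 = (3 * r + 1) + 2 * (3 * M * q)" using q by simp
  then have "(3 * x + 1) div 2 = (3 * r + 1) div 2 + M * (3 * q)" by simp
  then have "s mod M = (3 * r + 1) div 2 mod M" using s by (simp add: mod_mod_cancel)
  moreover have "odd r" using x by (metis dvd_mod_iff dvd_triv_left)
  ultimately show "r < 2 * M \<and> s < 2 * M \<and> odd r \<and> (3 * r + 1) div 2 mod M = s mod M"
    using M x s by simp
next
  assume h: "r < 2 * M \<and> s < 2 * M \<and> odd r \<and> (3 * r + 1) div 2 mod M = s mod M"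
  define A where "A = (3 * r + 1) div 2"
  have "s div M < 2" using h by (simp add: less_mult_imp_div_less)
  then obtain c where parity: "(A div M + 3 * c) mod 2 = s div M" using parity_shift_by_3 by blast
  have reorder: "A + 3 * M * c = A + (3 * c) * M" by (simp add: ac_simps)
  have "(A + 3 * M * c) div M = A div M + 3 * c" "(A + 3 * M * c) mod M = A mod M"
    unfolding reorder using M by simp_all
  then have "(A + 3 * M * c) mod (2 * M) = M * (s div M) + A mod M"
    using mod_double[of "A + 3 * M * c" M] parity by simp
  also have "\<dots> = s" using h by (simp only: A_def mult_div_mod_eq)
  finally have y: "(A + 3 * M * c) mod (2 * M) = s" .
  have "3 * (r + 2 * M * c) + 1 = (3 * r + 1) + 2 * (3 * M * c)" by simp
  then have "(3 * (r + 2 * M * c) + 1) div 2 = A + 3 * M * c" unfolding A_def by simp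
  moreover have "odd (r + 2 * M * c)" "(r + 2 * M * c) mod (2 * M) = r" using h by simp_all
  moreover have "0 < r + 2 * M * c" "0 < A + 3 * M * c" using h unfolding A_def by (simp_all add: odd_pos)
  ultimately show "gamma_red (2 * M) r s"
    unfolding gamma_red_def using y by (intro exI[of _ "r + 2 * M * c"] exI[of _ "A + 3 * M * c"]) simp
qed

lemma gamma_edge_iff_T_mod:
  assumes "0 < M"
  shows "gamma_edge (2 * M) r s \<longleftrightarrow> r < 2 * M \<and> s < 2 * M \<and> T r mod M = s mod M"
proof (cases "even r")
  case True
  have "r < 2 * M \<Longrightarrow> T r mod M = r div 2" using True by (simp add: T_def)
  then show ?thesis
    using True unfolding gamma_edge_def gamma_black_iff[OF assms] gamma_red_iff[OF assms] by auto
next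
  case False
  then show ?thesis
    unfolding gamma_edge_def gamma_black_iff[OF assms] gamma_red_iff[OF assms] by (auto simp: T_def)
qed

lemma gamma_edge_iff_pbits:
  assumes N: "1 \<le> N"
  shows "gamma_edge (2 ^ N) r s \<longleftrightarrow> r < 2 ^ N \<and> s < 2 ^ N \<and> (\<forall>i. Suc i < N \<longrightarrow> pbit r (Suc i) = pbit s i)"
proof -
  have p: "(2::nat) ^ N = 2 * 2 ^ (N - 1)" using N by (simp add: power_eq_if)
  have "gamma_edge (2 ^ N) r s \<longleftrightarrow> r < 2 ^ N \<and> s < 2 ^ N \<and> T r mod 2 ^ (N - 1) = s mod 2 ^ (N - 1)"
    unfolding p by (rule gamma_edge_iff_T_mod) simp
  also have "T r mod 2 ^ (N - 1) = s mod 2 ^ (N - 1) \<longleftrightarrow> (\<forall>i<N - 1. pbit (T r) i = pbit s i)"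
    by (rule pbits_eq_iff_mod[symmetric])
  also have "\<dots> \<longleftrightarrow> (\<forall>i. Suc i < N \<longrightarrow> pbit r (Suc i) = pbit s i)"
    unfolding pbit_T by (auto simp: less_diff_conv)
  finally show ?thesis .
qed

lemma bit_cancel_mod_2: "(a::nat) < 2 \<Longrightarrow> b < 2 \<Longrightarrow> (s + a) mod 2 = (s + b) mod 2 \<Longrightarrow> a = b"
  by presburger

lemma bit_solve_mod_2: "(p::nat) < 2 \<Longrightarrow> (s + (p + s) mod 2) mod 2 = p"
  by presburger

text \<open>Hbar maps arrows of Gamma_(2^(n+k-1)) to arrows of Gamma_(2^n) (window sums commute with the
  shift).\<close>
lemma Hbar_edge:
  assumes n: "1 \<le> n" and k: "k = Suc k'" and e: "gamma_edge (2 ^ (n + k')) x y"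
  shows "gamma_edge (2 ^ n) (Hbar n k x) (Hbar n k y)"
proof -
  have k1: "1 \<le> k" using k by simp
  have shift: "pbit x (Suc i) = pbit y i" if "Suc i < n + k'" for i
    using e that gamma_edge_iff_pbits[of "n + k'"] n by auto
  have "pbit (Hbar n k x) (Suc i) = pbit (Hbar n k y) i" if i: "Suc i < n" for i
  proof -
    have "(\<Sum>j<k. pbit x (Suc i + j)) = (\<Sum>j<k. pbit y (i + j))"
      by (intro sum.cong refl) (use i shift k in auto)
    then show ?thesis using Hbar_pbit(2)[OF k1] i by simp
  qed
  then show ?thesis using gamma_edge_iff_pbits[OF n] Hbar_pbit(1)[OF k1] by blast
qed

text \<open>Every arrow leaving Hbar x lifts to an arrow leaving x: the new last bit is chosen so that
  the last window sum is the required bit.\<close>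
lemma Hbar_lift_successor:
  assumes n: "1 \<le> n" and k: "k = Suc k'" and x: "x < 2 ^ (n + k')"
    and e: "gamma_edge (2 ^ n) (Hbar n k x) m"
  shows "\<exists>y<2 ^ (n + k'). gamma_edge (2 ^ (n + k')) x y \<and> Hbar n k y = m"
proof -
  define N where "N = n + k'"
  have N: "1 \<le> N" using n unfolding N_def by simp
  have k1: "1 \<le> k" using k by simp
  have m: "m < 2 ^ n" "\<And>i. Suc i < n \<Longrightarrow> pbit (Hbar n k x) (Suc i) = pbit m i"
    using e gamma_edge_iff_pbits[OF n] by blast+
  define b where "b i = (if Suc i < N then pbit x (Suc i)
                         else (pbit m (n - 1) + (\<Sum>j<k'. pbit x (n + j))) mod 2)" for i
  have "\<forall>i<N. b i < 2" unfolding b_def using pbit_less_2 by simp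
  then obtain y where y: "y < 2 ^ N" and y_bits: "\<And>i. i < N \<Longrightarrow> pbit y i = b i"
    using pbits_surj by blast
  have edge: "gamma_edge (2 ^ N) x y"
    using gamma_edge_iff_pbits[OF N] x y y_bits unfolding N_def b_def by simp
  have "pbit (Hbar n k y) i = pbit m i" if i: "i < n" for i
  proof (cases "Suc i < n")
    case True
    have "(\<Sum>j<k. pbit y (i + j)) = (\<Sum>j<k. pbit x (Suc i + j))"
      by (intro sum.cong refl) (use True y_bits k in \<open>auto simp: N_def b_def\<close>)
    then show ?thesis using Hbar_pbit(2)[OF _ i] Hbar_pbit(2)[OF _ True] m(2)[OF True] k by simp
  next
    case False
    then have i: "i = n - 1" using i by simp
    have low: "(\<Sum>j<k'. pbit y (n - 1 + j)) = (\<Sum>j<k'. pbit x (n + j))"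
      by (intro sum.cong refl) (use n y_bits in \<open>auto simp: N_def b_def\<close>)
    have top: "pbit y (n - 1 + k') = (pbit m (n - 1) + (\<Sum>j<k'. pbit x (n + j))) mod 2"
      using n y_bits[of "n - 1 + k'"] unfolding N_def b_def by simp
    have "pbit (Hbar n k y) (n - 1) = (\<Sum>j<Suc k'. pbit y (n - 1 + j)) mod 2"
      using Hbar_pbit(2)[of k "n - 1" n y] n k by simp
    also have "\<dots> = ((\<Sum>j<k'. pbit y (n - 1 + j)) + pbit y (n - 1 + k')) mod 2"
      by (simp only: sum.lessThan_Suc)
    also have "\<dots> = pbit m (n - 1)" unfolding low top by (rule bit_solve_mod_2[OF pbit_less_2])
    finally show ?thesis using i by simp
  qed
  then have "Hbar n k y = m" by (rule pbits_determine[OF Hbar_pbit(1)[OF k1] m(1)])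
  then show ?thesis using edge y unfolding N_def by blast
qed

text \<open>Two arrows leaving x whose targets have the same image coincide: the targets share all bits
  but the last, which is then forced by the last window sum.\<close>
lemma Hbar_successor_inj:
  assumes n: "1 \<le> n" and k: "k = Suc k'"
    and e1: "gamma_edge (2 ^ (n + k')) x y1" and e2: "gamma_edge (2 ^ (n + k')) x y2"
    and h: "Hbar n k y1 = Hbar n k y2"
  shows "y1 = y2"
proof -
  define N where "N = n + k'"
  have N: "1 \<le> N" using n unfolding N_def by simp
  have k1: "1 \<le> k" using k by simp
  have y: "y1 < 2 ^ N" "y2 < 2 ^ N" "\<And>i. Suc i < N \<Longrightarrow> pbit y1 i = pbit y2 i"
    using e1 e2 gamma_edge_iff_pbits[OF N] unfolding N_def by auto
  have top: "pbit y1 (n - 1 + k') = pbit y2 (n - 1 + k')"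
  proof -
    have low: "(\<Sum>j<k'. pbit y1 (n - 1 + j)) = (\<Sum>j<k'. pbit y2 (n - 1 + j))"
      by (intro sum.cong refl) (use n y(3) in \<open>auto simp: N_def\<close>)
    have "((\<Sum>j<k'. pbit y1 (n - 1 + j)) + pbit y1 (n - 1 + k')) mod 2
        = ((\<Sum>j<k'. pbit y2 (n - 1 + j)) + pbit y2 (n - 1 + k')) mod 2"
      using h Hbar_pbit(2)[OF k1, of "n - 1" n y1] Hbar_pbit(2)[OF k1, of "n - 1" n y2] n k by simp
    then show ?thesis unfolding low by (rule bit_cancel_mod_2[OF pbit_less_2 pbit_less_2])
  qed
  show ?thesis
  proof (rule pbits_determine[OF y(1,2)])
    fix i assume "i < N"
    then have "Suc i < N \<or> i = n - 1 + k'" using n unfolding N_def by linarith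
    then show "pbit y1 i = pbit y2 i" using y(3) top by blast
  qed
qed

text \<open>Two arrows entering y whose sources have the same image coincide: the sources share all bits
  but the first, which is then forced by the first window sum.\<close>
lemma Hbar_predecessor_inj:
  assumes n: "1 \<le> n" and k: "k = Suc k'"
    and e1: "gamma_edge (2 ^ (n + k')) x1 y" and e2: "gamma_edge (2 ^ (n + k')) x2 y"
    and h: "Hbar n k x1 = Hbar n k x2"
  shows "x1 = x2"
proof -
  define N where "N = n + k'"
  have N: "1 \<le> N" using n unfolding N_def by simp
  have k1: "1 \<le> k" using k by simp
  have x: "x1 < 2 ^ N" "x2 < 2 ^ N" "\<And>i. Suc i < N \<Longrightarrow> pbit x1 (Suc i) = pbit x2 (Suc i)"
    using e1 e2 gamma_edge_iff_pbits[OF N] unfolding N_def by auto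
  have bottom: "pbit x1 0 = pbit x2 0"
  proof -
    have high: "(\<Sum>j<k'. pbit x1 (Suc j)) = (\<Sum>j<k'. pbit x2 (Suc j))"
      by (intro sum.cong refl) (use n x(3) in \<open>auto simp: N_def\<close>)
    have split: "(\<Sum>j<k. pbit z (0 + j)) = (\<Sum>j<k'. pbit z (Suc j)) + pbit z 0" for z
      unfolding k sum.lessThan_Suc_shift add_0 by (rule add.commute)
    have "0 < n" using n by simp
    from Hbar_pbit(2)[OF k1 this] have
      "((\<Sum>j<k'. pbit x1 (Suc j)) + pbit x1 0) mod 2 = ((\<Sum>j<k'. pbit x2 (Suc j)) + pbit x2 0) mod 2"
      using h unfolding split by metis
    then show ?thesis unfolding high by (rule bit_cancel_mod_2[OF pbit_less_2 pbit_less_2])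
  qed
  show ?thesis
  proof (rule pbits_determine[OF x(1,2)])
    fix i assume "i < N"
    then show "pbit x1 i = pbit x2 i" using x(3) bottom by (cases i) auto
  qed
qed

theorem mainTheorem20:
  fixes n k :: nat and X :: "nat set"
  assumes "1 \<le> n" and "1 \<le> k"
    and "X \<subseteq> {..<2 ^ n}"
    and "is_dcycle (gamma_edge (2 ^ n)) X"
  shows "disjoint_union_of_cycles (gamma_edge (2 ^ (n + k - 1)))
           {x. x < 2 ^ (n + k - 1) \<and> Hbar n k x \<in> X}"
proof -
  obtain k' where k: "k = Suc k'" using assms(2) by (cases k) auto
  have preimage: "{x \<in> {..<2 ^ (n + k')}. Hbar n k x \<in> X} = {x. x < 2 ^ (n + k - 1) \<and> Hbar n k x \<in> X}"
    using k by auto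
  have "permutation_graph_on (gamma_edge (2 ^ n)) X"
    using assms(4) by (rule dcycle_permutation_graph_on)
  then have "permutation_graph_on (gamma_edge (2 ^ (n + k'))) {x \<in> {..<2 ^ (n + k')}. Hbar n k x \<in> X}"
  proof (rule permutation_graph_on_lift)
    show "gamma_edge (2 ^ n) (Hbar n k x) (Hbar n k y)" if "gamma_edge (2 ^ (n + k')) x y" for x y
      using Hbar_edge[OF assms(1) k that] .
    show "\<exists>y\<in>{..<2 ^ (n + k')}. gamma_edge (2 ^ (n + k')) x y \<and> Hbar n k y = m"
      if "x \<in> {..<2 ^ (n + k')}" "gamma_edge (2 ^ n) (Hbar n k x) m" for x m
      using Hbar_lift_successor[OF assms(1) k _ that(2)] that(1) by auto
  qed (use Hbar_successor_inj[OF assms(1) k] Hbar_predecessor_inj[OF assms(1) k] in blast)+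
  then have "permutation_graph_on (gamma_edge (2 ^ (n + k - 1))) {x. x < 2 ^ (n + k - 1) \<and> Hbar n k x \<in> X}"
    unfolding preimage using k by simp
  moreover have "finite {x. x < 2 ^ (n + k - 1) \<and> Hbar n k x \<in> X}" by simp
  ultimately show ?thesis using permutation_graph_on_cycles by blast
qed

end
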